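(* Let $p\ge4$, let $\{\mu_a\}$ be a conditional design satisfying Assumption 1, and let $\theta\in\Theta$ be the true parameter with $w=\alpha+B\theta$. Let $A_1,\dots,A_n$ be i.i.d. copies of the observed subset $A$, and let $\hat\theta_n\in\Theta$ be a maximizer of the log-likelihood $l_n(\theta)=\sum_{i=1}^n\ln \mathbf{1}_{A_i}^{\top}(\alpha+B\theta)$ over $\Theta$. Then $\hat\theta_n\to\theta$ almost surely as $n\to\infty$, and consequently $\hat w_n=\alpha+B\hat\theta_n\to w$ almost surely.
   Context: A conditional design on $[p]$ is a collection $\{\mu_a\ge0: a\subseteq[p]\}$ with $\mu_a=0$ if $|a|<2$ and $\sum_{a\ni j}\mu_a=1$ for all $j\in[p]$; the observed subset $A$ is generated from $X$ with $\mathbb{P}(X=j)=w_j$ by $\mathbb{P}(A=a\mid X=j)=\mu_a\mathbb{1}\{j\in a\}$, so $\mathbb{P}(A=a)=\mu_a\mathbf{1}_a^\top w$. $\mathbf{1}_a\in\{0,1\}^p$ is the indicator vector of $a$. $\Theta=\{\theta\in\mathbb{R}^{p-1}:\theta_i\ge0,\sum_i\theta_i\le1\}$, $\alpha=(0,\dots,0,1)^\top\in\mathbb{R}^p$, $B=\begin{pmatrix}I_{p-1}\\ -\mathbf{1}^\top\end{pmatrix}\in\mathbb{R}^{p\times(p-1)}$. Assumption 1: for $u\in\mathbb{R}^{p-1}$, if $\mathbf{1}_a^\top Bu=0$ for all $a$ with $\mu_a>0$, then $u=0$. *)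

theory Defs
  imports "HOL-Probability.Probability"
begin

text \<open>Index set [p] = {1..p}; vectors in R^p and R^(p-1) are functions nat => real,
  only their values on {1..p} resp. {1..p-1} matter.\<close>

definition alpha :: "nat \<Rightarrow> nat \<Rightarrow> real" where
  "alpha p j = (if j = p then 1 else 0)"

text \<open>B u for B = (I_{p-1} ; -1^T), u in R^(p-1)\<close>
definition Bmul :: "nat \<Rightarrow> (nat \<Rightarrow> real) \<Rightarrow> nat \<Rightarrow> real" where
  "Bmul p u j = (if j < p then u j else - (\<Sum>i\<in>{1..p-1}. u i))"

definition ind_dot :: "nat set \<Rightarrow> (nat \<Rightarrow> real) \<Rightarrow> real" where
  "ind_dot a v = (\<Sum>j\<in>a. v j)"

definition conditional_design :: "nat \<Rightarrow> (nat set \<Rightarrow> real) \<Rightarrow> bool" where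
  "conditional_design p \<mu> \<longleftrightarrow>
     (\<forall>a\<in>Pow {1..p}. 0 \<le> \<mu> a) \<and>
     (\<forall>a\<in>Pow {1..p}. card a < 2 \<longrightarrow> \<mu> a = 0) \<and>
     (\<forall>j\<in>{1..p}. (\<Sum>a\<in>{a\<in>Pow {1..p}. j \<in> a}. \<mu> a) = 1)"

definition assumption1 :: "nat \<Rightarrow> (nat set \<Rightarrow> real) \<Rightarrow> bool" where
  "assumption1 p \<mu> \<longleftrightarrow>
     (\<forall>u::nat \<Rightarrow> real. (\<forall>a\<in>Pow {1..p}. \<mu> a > 0 \<longrightarrow> ind_dot a (Bmul p u) = 0)
        \<longrightarrow> (\<forall>i\<in>{1..p-1}. u i = 0))"

definition Theta :: "nat \<Rightarrow> (nat \<Rightarrow> real) set" where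
  "Theta p = {\<theta>. (\<forall>i\<in>{1..p-1}. 0 \<le> \<theta> i) \<and> (\<Sum>i\<in>{1..p-1}. \<theta> i) \<le> 1}"

definition loglik :: "nat \<Rightarrow> nat \<Rightarrow> (nat \<Rightarrow> nat set) \<Rightarrow> (nat \<Rightarrow> real) \<Rightarrow> ereal" where
  "loglik p n S \<theta> =
     (if \<forall>i<n. ind_dot (S i) (\<lambda>j. alpha p j + Bmul p \<theta> j) > 0
      then ereal (\<Sum>i<n. ln (ind_dot (S i) (\<lambda>j. alpha p j + Bmul p \<theta> j)))
      else -\<infinity>)"

end

theory Submission
  imports Defs
begin

text \<open>
  Write \<open>\<pi> a = \<mu> a * ind_dot a w\<close> for the law of the observed subset and
  \<open>r\<^sub>n a = \<mu> a * ind_dot a w\<^sub>n\<close> for the law fitted at the estimate, where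
  \<open>w = \<alpha> + B \<theta>\<close> and \<open>w\<^sub>n = \<alpha> + B \<theta>hat\<^sub>n\<close>. By Hoeffding's inequality and
  Borel-Cantelli, almost surely every observed subset has \<open>\<pi> a > 0\<close> and the empirical
  frequencies \<open>f\<^sub>n a\<close> converge to \<open>\<pi> a\<close>. On such a sample path, the inequality
  \<open>l\<^sub>n \<theta> \<le> l\<^sub>n \<theta>hat\<^sub>n\<close> and \<open>ln t \<le> 2 (sqrt t - 1)\<close> give
  \<open>0 \<le> \<Sum>\<^sub>a f\<^sub>n a (sqrt (r\<^sub>n a / \<pi> a) - 1)\<close>. Replacing \<open>f\<^sub>n\<close> by \<open>\<pi>\<close> costs \<open>o(1)\<close>,
  whereas \<open>\<Sum>\<^sub>a \<pi> a (sqrt (r\<^sub>n a / \<pi> a) - 1)\<close> is at most minus half the squared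
  Hellinger distance of \<open>\<pi>\<close> and \<open>r\<^sub>n\<close>; hence \<open>r\<^sub>n \<longrightarrow> \<pi>\<close>. Dividing by \<open>\<mu> a\<close>,
  \<open>ind_dot a (B (\<theta>hat\<^sub>n - \<theta>)) \<longrightarrow> 0\<close> whenever \<open>\<mu> a > 0\<close>. Since \<open>\<theta>hat\<^sub>n - \<theta>\<close> is
  bounded, compactness together with Assumption 1 (the numbers \<open>ind_dot a (B u)\<close> with
  \<open>\<mu> a > 0\<close> determine \<open>u\<close>) forces \<open>\<theta>hat\<^sub>n \<longrightarrow> \<theta>\<close>.
\<close>

abbreviation weights :: "nat \<Rightarrow> (nat \<Rightarrow> real) \<Rightarrow> nat \<Rightarrow> real" where
  "weights p \<theta> \<equiv> \<lambda>j. alpha p j + Bmul p \<theta> j"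

lemma Theta_coord_bounds:
  assumes "\<theta> \<in> Theta p" "i \<in> {1..p-1}"
  shows "0 \<le> \<theta> i" "\<theta> i \<le> 1"
proof -
  show "0 \<le> \<theta> i" using assms by (auto simp: Theta_def)
  have "\<theta> i \<le> (\<Sum>k\<in>{1..p-1}. \<theta> k)"
    by (rule member_le_sum) (use assms in \<open>auto simp: Theta_def\<close>)
  then show "\<theta> i \<le> 1" using assms by (auto simp: Theta_def)
qed

lemma weights_nonneg:
  assumes "\<theta> \<in> Theta p" "j \<in> {1..p}"
  shows "0 \<le> weights p \<theta> j"
  using assms by (cases "j < p") (auto simp: Theta_def alpha_def Bmul_def)

lemma sum_weights:
  assumes "p \<ge> 1"
  shows "(\<Sum>j\<in>{1..p}. weights p \<theta> j) = 1"
proof -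
  have "{1..p} = insert p {1..p-1}" "p \<notin> {1..p-1}" using assms by auto
  then have "(\<Sum>j\<in>{1..p}. weights p \<theta> j) = weights p \<theta> p + (\<Sum>j\<in>{1..p-1}. weights p \<theta> j)"
    by simp
  also have "(\<Sum>j\<in>{1..p-1}. weights p \<theta> j) = (\<Sum>j\<in>{1..p-1}. \<theta> j)"
    by (rule sum.cong) (auto simp: alpha_def Bmul_def)
  finally show ?thesis by (simp add: alpha_def Bmul_def)
qed

lemma ind_dot_weights_nonneg:
  assumes "\<theta> \<in> Theta p" "a \<subseteq> {1..p}"
  shows "0 \<le> ind_dot a (weights p \<theta>)"
  unfolding ind_dot_def using assms by (intro sum_nonneg weights_nonneg) auto

lemma conditional_design_sum_ind_dot:
  assumes "conditional_design p \<mu>"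
  shows "(\<Sum>a\<in>Pow {1..p}. \<mu> a * ind_dot a w) = (\<Sum>j\<in>{1..p}. w j)"
proof -
  have "(\<Sum>a\<in>Pow {1..p}. \<mu> a * ind_dot a w)
      = (\<Sum>a\<in>Pow {1..p}. \<Sum>j\<in>{1..p}. if j \<in> a then \<mu> a * w j else 0)"
  proof (rule sum.cong)
    fix a
    assume "a \<in> Pow {1..p}"
    then have "ind_dot a w = (\<Sum>j\<in>{1..p}. if j \<in> a then w j else 0)"
      unfolding ind_dot_def by (simp add: sum.inter_restrict[symmetric] Int_absorb1)
    then show "\<mu> a * ind_dot a w = (\<Sum>j\<in>{1..p}. if j \<in> a then \<mu> a * w j else 0)"
      by (auto simp: sum_distrib_left intro!: sum.cong)
  qed simp
  also have "\<dots> = (\<Sum>j\<in>{1..p}. w j * (\<Sum>a\<in>{a\<in>Pow {1..p}. j \<in> a}. \<mu> a))"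
    by (subst sum.swap) (simp add: sum.inter_filter[symmetric] sum_distrib_left mult.commute)
  also have "\<dots> = (\<Sum>j\<in>{1..p}. w j)"
    using assms unfolding conditional_design_def by (intro sum.cong) auto
  finally show ?thesis .
qed

lemma sum_cell_probs:
  assumes "conditional_design p \<mu>" "p \<ge> 1"
  shows "(\<Sum>a\<in>Pow {1..p}. \<mu> a * ind_dot a (weights p \<theta>)) = 1"
  using conditional_design_sum_ind_dot[OF assms(1)] sum_weights[OF assms(2)] by simp

lemma cell_prob_nonneg:
  assumes "conditional_design p \<mu>" "\<theta> \<in> Theta p" "a \<in> Pow {1..p}"
  shows "0 \<le> \<mu> a * ind_dot a (weights p \<theta>)"
  using assms ind_dot_weights_nonneg[OF assms(2)]
  by (intro mult_nonneg_nonneg) (auto simp: conditional_design_def)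

lemma ind_dot_Bmul_diff:
  "ind_dot a (Bmul p (\<lambda>i. f i - g i)) = ind_dot a (weights p f) - ind_dot a (weights p g)"
  unfolding ind_dot_def Bmul_def sum_subtractf[symmetric]
  by (intro sum.cong) (auto simp: sum_subtractf)

lemma Bmul_tendsto:
  assumes "\<And>i. i \<in> {1..p-1} \<Longrightarrow> (\<lambda>n. u n i) \<longlonglongrightarrow> v i" "j \<in> {1..p}"
  shows "(\<lambda>n. Bmul p (u n) j) \<longlonglongrightarrow> Bmul p v j"
  using assms unfolding Bmul_def by (cases "j < p") (auto intro!: tendsto_intros)

lemma ind_dot_Bmul_tendsto:
  assumes "\<And>i. i \<in> {1..p-1} \<Longrightarrow> (\<lambda>n. u n i) \<longlonglongrightarrow> v i" "a \<subseteq> {1..p}"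
  shows "(\<lambda>n. ind_dot a (Bmul p (u n))) \<longlonglongrightarrow> ind_dot a (Bmul p v)"
  unfolding ind_dot_def using assms by (intro tendsto_sum Bmul_tendsto) auto

lemma bounded_coords_convergent_subseq:
  fixes u :: "nat \<Rightarrow> 'i \<Rightarrow> real"
  assumes "finite I" and bound: "\<And>n i. i \<in> I \<Longrightarrow> \<bar>u n i\<bar> \<le> C"
  obtains r l where "strict_mono r" "\<And>i. i \<in> I \<Longrightarrow> (\<lambda>n. u (r n) i) \<longlonglongrightarrow> l i"
proof -
  have bounded_coord: "bounded ((\<lambda>x. x i) ` range u)" if "i \<in> I" for i
    using bound[OF that] by (auto simp: bounded_iff)
  have "\<exists>l r. strict_mono r \<and>
      (\<forall>\<epsilon>>0. eventually (\<lambda>n. \<forall>i\<in>I. dist (u (r n) i) (l i) < \<epsilon>) sequentially)"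
    using compact_lemma_general[where proj = "\<lambda>x i. x i" and unproj = id,
        OF \<open>finite I\<close> bounded_coord] by auto
  then obtain l r where "strict_mono r"
    and close: "\<And>\<epsilon>. \<epsilon> > 0 \<Longrightarrow> eventually (\<lambda>n. \<forall>i\<in>I. dist (u (r n) i) (l i) < \<epsilon>) sequentially"
    by blast
  have "(\<lambda>n. u (r n) i) \<longlonglongrightarrow> l i" if "i \<in> I" for i
  proof (rule tendsto_iff[THEN iffD2], intro allI impI)
    fix \<epsilon> :: real
    assume "\<epsilon> > 0"
    with close[of \<epsilon>] that show "eventually (\<lambda>n. dist (u (r n) i) (l i) < \<epsilon>) sequentially"
      by (auto elim: eventually_mono)
  qed
  with \<open>strict_mono r\<close> show ?thesis by (rule that)
qed

lemma assumption1_tendsto_zero: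
  fixes u :: "nat \<Rightarrow> nat \<Rightarrow> real"
  assumes A1: "assumption1 p \<mu>"
    and bound: "\<And>n i. i \<in> {1..p-1} \<Longrightarrow> \<bar>u n i\<bar> \<le> C"
    and lim: "\<And>a. a \<in> Pow {1..p} \<Longrightarrow> \<mu> a > 0 \<Longrightarrow> (\<lambda>n. ind_dot a (Bmul p (u n))) \<longlonglongrightarrow> 0"
    and i: "i \<in> {1..p-1}"
  shows "(\<lambda>n. u n i) \<longlonglongrightarrow> 0"
proof (rule ccontr)
  assume "\<not> (\<lambda>n. u n i) \<longlonglongrightarrow> 0"
  then obtain \<epsilon> where "\<epsilon> > 0" and "\<not> eventually (\<lambda>n. dist (u n i) 0 < \<epsilon>) sequentially"
    unfolding tendsto_iff by blast
  then have "infinite {n. \<not> dist (u n i) 0 < \<epsilon>}"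
    by (simp add: eventually_cofinite[symmetric] cofinite_eq_sequentially)
  then obtain s :: "nat \<Rightarrow> nat"
    where s: "strict_mono s" and "\<forall>n. s n \<in> {n. \<not> dist (u n i) 0 < \<epsilon>}"
    using infinite_enumerate by meson
  then have far: "\<epsilon> \<le> \<bar>u (s n) i\<bar>" for n
    by (simp add: dist_real_def not_less)
  obtain r l where r: "strict_mono r" and l: "\<And>j. j \<in> {1..p-1} \<Longrightarrow> (\<lambda>n. u (s (r n)) j) \<longlonglongrightarrow> l j"
    using bounded_coords_convergent_subseq[of "{1..p-1}" "\<lambda>n. u (s n)"] bound by blast
  have "ind_dot a (Bmul p l) = 0" if a: "a \<in> Pow {1..p}" "\<mu> a > 0" for a
  proof (rule LIMSEQ_unique)
    show "(\<lambda>n. ind_dot a (Bmul p (u (s (r n))))) \<longlonglongrightarrow> ind_dot a (Bmul p l)"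
      using a by (intro ind_dot_Bmul_tendsto l) auto
    show "(\<lambda>n. ind_dot a (Bmul p (u (s (r n))))) \<longlonglongrightarrow> 0"
      using LIMSEQ_subseq_LIMSEQ[OF lim[OF a] strict_mono_o[OF s r]] by (simp add: o_def)
  qed
  then have "l i = 0"
    using A1 i unfolding assumption1_def by blast
  moreover have "\<epsilon> \<le> \<bar>l i\<bar>"
    using far by (intro LIMSEQ_le_const[OF tendsto_rabs[OF l[OF i]]]) auto
  ultimately show False using \<open>\<epsilon> > 0\<close> by simp
qed

definition empirical_freq :: "(nat \<Rightarrow> 'a) \<Rightarrow> 'a \<Rightarrow> nat \<Rightarrow> real" where
  "empirical_freq S a n = (\<Sum>i<n. if S i = a then 1 else 0) / real n"

lemma (in prob_space) empirical_freq_deviation_prob_le: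
  fixes A :: "nat \<Rightarrow> 'a \<Rightarrow> 'b"
  assumes A_meas: "\<And>i. A i \<in> M \<rightarrow>\<^sub>M count_space UNIV"
    and indep: "indep_vars (\<lambda>_. count_space UNIV) A UNIV"
    and prob_eq: "\<And>i. prob {x\<in>space M. A i x = a} = \<pi>"
    and "\<epsilon> > 0" "n > 0"
  shows "prob {x\<in>space M. \<epsilon> \<le> \<bar>empirical_freq (\<lambda>i. A i x) a n - \<pi>\<bar>} \<le> 2 * exp (-2 * \<epsilon>\<^sup>2) ^ n"
proof -
  define X where "X i x = (if A i x = a then 1 else (0::real))" for i x
  have X_meas: "X i \<in> borel_measurable M" for i
  proof -
    have "X i = (\<lambda>s. if s = a then 1 else 0) \<circ> A i" by (auto simp: X_def)
    moreover have "(\<lambda>s. if s = a then 1 else (0::real)) \<in> count_space UNIV \<rightarrow>\<^sub>M borel" by simp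
    ultimately show ?thesis using A_meas by (metis measurable_comp)
  qed
  have X_indep: "indep_vars (\<lambda>_. borel) X {..<n}"
    unfolding X_def by (rule indep_vars_compose2[OF indep_vars_subset[OF indep]]) auto
  have X_expectation: "expectation (X i) = \<pi>" for i
  proof -
    have "expectation (X i) = expectation (indicator {x\<in>space M. A i x = a})"
      by (intro Bochner_Integration.integral_cong) (auto simp: X_def indicator_def)
    also have "\<dots> = \<pi>" using prob_eq[of i] by (simp add: Int_absorb2)
    finally show ?thesis .
  qed
  interpret Hoeffding_ineq M "{..<n}" X "\<lambda>_. 0" "\<lambda>_. 1" "real n * \<pi>"
    by unfold_locales (use X_meas X_indep in \<open>auto simp: X_expectation X_def\<close>)
  have "{x\<in>space M. \<epsilon> \<le> \<bar>empirical_freq (\<lambda>i. A i x) a n - \<pi>\<bar>}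
      = {x\<in>space M. real n * \<epsilon> \<le> \<bar>(\<Sum>i<n. X i x) - real n * \<pi>\<bar>}"
    using \<open>n > 0\<close>
    by (auto simp: empirical_freq_def X_def abs_divide field_simps simp flip: diff_divide_distrib)
  also have "prob \<dots> \<le> 2 * exp (-2 * (real n * \<epsilon>)\<^sup>2 / (\<Sum>i<n. (1 - 0)\<^sup>2))"
    using \<open>\<epsilon> > 0\<close> \<open>n > 0\<close> by (intro Hoeffding_ineq_abs_ge) auto
  also have "\<dots> = 2 * exp (real n * (-2 * \<epsilon>\<^sup>2))"
    using \<open>n > 0\<close> by (simp add: power2_eq_square)
  also have "\<dots> = 2 * exp (-2 * \<epsilon>\<^sup>2) ^ n"
    by (subst exp_of_nat_mult[symmetric]) simp
  finally show ?thesis .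
qed

lemma (in prob_space) AE_eventually_empirical_freq_close:
  fixes A :: "nat \<Rightarrow> 'a \<Rightarrow> 'b"
  assumes A_meas: "\<And>i. A i \<in> M \<rightarrow>\<^sub>M count_space UNIV"
    and indep: "indep_vars (\<lambda>_. count_space UNIV) A UNIV"
    and prob_eq: "\<And>i. prob {x\<in>space M. A i x = a} = \<pi>"
    and "\<epsilon> > 0"
  shows "AE x in M. eventually (\<lambda>n. \<bar>empirical_freq (\<lambda>i. A i x) a n - \<pi>\<bar> < \<epsilon>) sequentially"
proof -
  define E where "E n = {x\<in>space M. \<epsilon> \<le> \<bar>empirical_freq (\<lambda>i. A i x) a (Suc n) - \<pi>\<bar>}" for n
  note [measurable] = A_meas
  have E_sets: "E n \<in> events" for n
    unfolding E_def empirical_freq_def by measurable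
  have E_bound: "prob (E n) \<le> 2 * exp (-2 * \<epsilon>\<^sup>2) ^ Suc n" for n
    unfolding E_def by (rule empirical_freq_deviation_prob_le[OF A_meas indep prob_eq \<open>\<epsilon> > 0\<close>]) simp
  have "summable (\<lambda>n. 2 * exp (-2 * \<epsilon>\<^sup>2) ^ Suc n)"
    using \<open>\<epsilon> > 0\<close> by (intro summable_mult summable_Suc_iff[THEN iffD2] summable_geometric) auto
  then have "summable (\<lambda>n. prob (E n))"
    by (rule summable_comparison_test'[where N=0]) (use E_bound in auto)
  then have "AE x in M. eventually (\<lambda>n. x \<in> space M - E n) sequentially"
    by (intro borel_cantelli_AE1) (auto simp: E_sets emeasure_eq_measure)
  then show ?thesis
  proof eventually_elim
    case (elim x)
    then have "eventually (\<lambda>n. \<bar>empirical_freq (\<lambda>i. A i x) a (Suc n) - \<pi>\<bar> < \<epsilon>) sequentially"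
      by (auto elim!: eventually_mono simp: E_def not_le)
    then show ?case
      using eventually_sequentially_Suc[of "\<lambda>n. \<bar>empirical_freq (\<lambda>i. A i x) a n - \<pi>\<bar> < \<epsilon>"] by simp
  qed
qed

lemma (in prob_space) AE_empirical_freq_tendsto:
  fixes A :: "nat \<Rightarrow> 'a \<Rightarrow> 'b"
  assumes A_meas: "\<And>i. A i \<in> M \<rightarrow>\<^sub>M count_space UNIV"
    and indep: "indep_vars (\<lambda>_. count_space UNIV) A UNIV"
    and prob_eq: "\<And>i. prob {x\<in>space M. A i x = a} = \<pi>"
  shows "AE x in M. (\<lambda>n. empirical_freq (\<lambda>i. A i x) a n) \<longlonglongrightarrow> \<pi>"
proof -
  have "AE x in M. \<forall>k::nat. eventually
      (\<lambda>n. \<bar>empirical_freq (\<lambda>i. A i x) a n - \<pi>\<bar> < 1 / real (Suc k)) sequentially"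
    unfolding AE_all_countable
    by (intro allI AE_eventually_empirical_freq_close[OF A_meas indep prob_eq]) simp
  then show ?thesis
  proof eventually_elim
    case (elim x)
    show ?case
    proof (rule LIMSEQ_I)
      fix r :: real
      assume "r > 0"
      then obtain k where k: "1 / real (Suc k) < r"
        by (metis nat_approx_posE One_nat_def)
      from elim have "eventually
          (\<lambda>n. \<bar>empirical_freq (\<lambda>i. A i x) a n - \<pi>\<bar> < 1 / real (Suc k)) sequentially" ..
      then have "eventually (\<lambda>n. \<bar>empirical_freq (\<lambda>i. A i x) a n - \<pi>\<bar> < r) sequentially"
        by (rule eventually_mono) (use k in linarith)
      then show "\<exists>N. \<forall>n\<ge>N. norm (empirical_freq (\<lambda>i. A i x) a n - \<pi>) < r"
        by (simp add: eventually_sequentially)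
    qed
  qed
qed

lemma (in prob_space) AE_sample_path_typical:
  fixes A :: "nat \<Rightarrow> 'a \<Rightarrow> 'b"
  assumes A_meas: "\<And>i. A i \<in> M \<rightarrow>\<^sub>M count_space UNIV"
    and indep: "indep_vars (\<lambda>_. count_space UNIV) A UNIV"
    and "finite P"
    and prob_eq: "\<And>i a. a \<in> P \<Longrightarrow> prob {x\<in>space M. A i x = a} = \<pi> a"
    and sum_\<pi>: "(\<Sum>a\<in>P. \<pi> a) = 1"
  shows "AE x in M. (\<forall>i. A i x \<in> {a\<in>P. 0 < \<pi> a}) \<and>
                    (\<forall>a\<in>P. (\<lambda>n. empirical_freq (\<lambda>i. A i x) a n) \<longlonglongrightarrow> \<pi> a)"
proof -
  define T where "T = {a\<in>P. 0 < \<pi> a}"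
  have events_eq: "{x\<in>space M. A i x = a} \<in> events" for i a
    using measurable_sets[OF A_meas, of "{a}" i] by (simp add: vimage_def Int_def conj_commute)
  have \<pi>_nonneg: "0 \<le> \<pi> a" if "a \<in> P" for a
    using prob_eq[OF that, of 0] by (metis measure_nonneg)
  have sum_T: "(\<Sum>a\<in>T. \<pi> a) = 1"
    using \<open>finite P\<close> \<pi>_nonneg sum_\<pi>
    by (subst sum.mono_neutral_left[of P]) (force simp: T_def less_le)+
  have "AE x in M. A i x \<in> T" for i
  proof -
    have "{x\<in>space M. A i x \<in> T} = (\<Union>a\<in>T. {x\<in>space M. A i x = a})"
      by auto
    then have "prob {x\<in>space M. A i x \<in> T} = (\<Sum>a\<in>T. prob {x\<in>space M. A i x = a})"
      using \<open>finite P\<close> events_eq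
      by (simp, intro measure_finite_Union) (auto simp: T_def disjoint_family_on_def)
    also have "\<dots> = 1"
      using prob_eq sum_T by (simp add: T_def)
    finally have "AE x in M. x \<in> {x\<in>space M. A i x \<in> T}"
      by (rule AE_prob_1)
    then show ?thesis by auto
  qed
  then have "AE x in M. \<forall>i. A i x \<in> T"
    by (simp add: AE_all_countable)
  moreover have "AE x in M. \<forall>a\<in>P. (\<lambda>n. empirical_freq (\<lambda>i. A i x) a n) \<longlonglongrightarrow> \<pi> a"
    using \<open>finite P\<close> by (intro AE_finite_allI AE_empirical_freq_tendsto[OF A_meas indep] prob_eq)
  ultimately show ?thesis
    unfolding T_def by eventually_elim blast
qed

lemma sum_div_eq_sum_empirical_freq:
  fixes g :: "'a \<Rightarrow> real"
  assumes "finite T" "\<And>i. i < n \<Longrightarrow> S i \<in> T"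
  shows "(\<Sum>i<n. g (S i)) / real n = (\<Sum>a\<in>T. empirical_freq S a n * g a)"
proof -
  have "(\<Sum>i<n. g (S i)) = (\<Sum>i<n. \<Sum>a\<in>T. if S i = a then g a else 0)"
    using assms by (intro sum.cong refl) (simp add: sum.delta')
  also have "\<dots> = (\<Sum>a\<in>T. (\<Sum>i<n. if S i = a then 1 else 0) * g a)"
    by (subst sum.swap) (auto simp: sum_distrib_right intro!: sum.cong)
  finally show ?thesis
    by (simp add: empirical_freq_def sum_divide_distrib[of _ T])
qed

lemma ln_le_two_sqrt_minus_one:
  fixes t :: real
  assumes "t > 0"
  shows "ln t \<le> 2 * (sqrt t - 1)"
proof -
  have "ln t = 2 * ln (sqrt t)" using assms by (simp add: ln_sqrt)
  also have "ln (sqrt t) \<le> sqrt t - 1" using assms by (intro ln_le_minus_one) simp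
  finally show ?thesis by simp
qed

lemma loglik_le_imp_sqrt_ratio_contrast_nonneg:
  fixes S :: "nat \<Rightarrow> nat set"
  assumes "finite T" and pos: "\<And>a. a \<in> T \<Longrightarrow> 0 < ind_dot a (weights p \<theta>)"
    and sample: "\<And>i. i < n \<Longrightarrow> S i \<in> T" and "n > 0"
    and le: "loglik p n S \<theta> \<le> loglik p n S \<theta>'"
  shows "0 \<le> (\<Sum>a\<in>T. empirical_freq S a n *
                (sqrt (ind_dot a (weights p \<theta>') / ind_dot a (weights p \<theta>)) - 1))"
proof -
  define q where "q t a = ind_dot a (weights p t)" for t a
  define h where "h a = sqrt (q \<theta>' a / q \<theta> a) - 1" for a
  have q\<theta>: "loglik p n S \<theta> = ereal (\<Sum>i<n. ln (q \<theta> (S i)))"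
    using pos sample by (simp add: loglik_def q_def)
  have pos': "0 < q \<theta>' (S i)" if "i < n" for i
  proof (rule ccontr)
    assume "\<not> 0 < q \<theta>' (S i)"
    then have "loglik p n S \<theta>' = -\<infinity>"
      using that by (auto simp: loglik_def q_def)
    with le q\<theta> show False by simp
  qed
  then have "loglik p n S \<theta>' = ereal (\<Sum>i<n. ln (q \<theta>' (S i)))"
    by (simp add: loglik_def q_def)
  with le q\<theta> have "0 \<le> (\<Sum>i<n. ln (q \<theta>' (S i)) - ln (q \<theta> (S i)))"
    by (simp add: sum_subtractf)
  also have "\<dots> \<le> (\<Sum>i<n. 2 * h (S i))"
  proof (rule sum_mono)
    fix i
    assume "i \<in> {..<n}"
    then have "0 < q \<theta>' (S i)" "0 < q \<theta> (S i)"
      using pos' pos sample by (auto simp: q_def)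
    then have "ln (q \<theta>' (S i)) - ln (q \<theta> (S i)) = ln (q \<theta>' (S i) / q \<theta> (S i))"
      by (simp add: ln_div)
    also have "\<dots> \<le> 2 * h (S i)"
      unfolding h_def using \<open>0 < q \<theta>' (S i)\<close> \<open>0 < q \<theta> (S i)\<close>
      by (intro ln_le_two_sqrt_minus_one) simp
    finally show "ln (q \<theta>' (S i)) - ln (q \<theta> (S i)) \<le> 2 * h (S i)" .
  qed
  finally have "0 \<le> (\<Sum>i<n. h (S i)) / real n"
    by (simp add: sum_distrib_left[symmetric])
  then show ?thesis
    using sum_div_eq_sum_empirical_freq[OF \<open>finite T\<close> sample, where g = h] by (simp add: h_def q_def)
qed

lemma sqrt_ratio_contrast_le_neg_hellinger:
  fixes \<pi> r :: "'a \<Rightarrow> real"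
  assumes "finite T" and pos: "\<And>a. a \<in> T \<Longrightarrow> 0 < \<pi> a" and "(\<Sum>a\<in>T. \<pi> a) = 1"
    and nonneg: "\<And>a. a \<in> T \<Longrightarrow> 0 \<le> r a" and "(\<Sum>a\<in>T. r a) \<le> 1"
  shows "(\<Sum>a\<in>T. \<pi> a * (sqrt (r a / \<pi> a) - 1)) \<le> - (\<Sum>a\<in>T. (sqrt (\<pi> a) - sqrt (r a))\<^sup>2) / 2"
proof -
  have term_eq: "\<pi> a * (sqrt (r a / \<pi> a) - 1) = - (sqrt (\<pi> a) - sqrt (r a))\<^sup>2 / 2 + (r a - \<pi> a) / 2"
    if "a \<in> T" for a
  proof -
    have "\<pi> a * sqrt (r a / \<pi> a) = sqrt (\<pi> a) * sqrt (r a)"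
      using pos[OF that] nonneg[OF that] by (simp add: real_sqrt_divide field_simps)
    then show ?thesis
      using pos[OF that] nonneg[OF that] by (simp add: power2_diff field_simps)
  qed
  have "(\<Sum>a\<in>T. \<pi> a * (sqrt (r a / \<pi> a) - 1))
      = - (\<Sum>a\<in>T. (sqrt (\<pi> a) - sqrt (r a))\<^sup>2) / 2 + ((\<Sum>a\<in>T. r a) - (\<Sum>a\<in>T. \<pi> a)) / 2"
    by (simp add: term_eq sum.distrib sum_subtractf sum_divide_distrib[symmetric] sum_negf)
  then show ?thesis using assms by simp
qed

lemma hellinger_le_freq_deviation:
  fixes \<pi> f r :: "'a \<Rightarrow> real"
  assumes fin: "finite T" and pos: "\<And>a. a \<in> T \<Longrightarrow> 0 < \<pi> a" and sum_\<pi>: "(\<Sum>a\<in>T. \<pi> a) = 1"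
    and nonneg: "\<And>a. a \<in> T \<Longrightarrow> 0 \<le> r a" and sum_r: "(\<Sum>a\<in>T. r a) \<le> 1"
    and contrast: "0 \<le> (\<Sum>a\<in>T. f a * (sqrt (r a / \<pi> a) - 1))"
  shows "(\<Sum>a\<in>T. (sqrt (\<pi> a) - sqrt (r a))\<^sup>2) \<le> 2 * (\<Sum>a\<in>T. \<bar>f a - \<pi> a\<bar> * (1 / sqrt (\<pi> a) + 1))"
proof -
  define h where "h a = sqrt (r a / \<pi> a) - 1" for a
  have h_bound: "\<bar>h a\<bar> \<le> 1 / sqrt (\<pi> a) + 1" if "a \<in> T" for a
  proof -
    have "r a \<le> 1"
      using member_le_sum[of a T r] nonneg sum_r fin that by fastforce
    then have "sqrt (r a / \<pi> a) \<le> 1 / sqrt (\<pi> a)"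
      using pos[OF that] by (simp add: real_sqrt_divide divide_right_mono)
    moreover have "0 \<le> sqrt (r a / \<pi> a)" "0 < 1 / sqrt (\<pi> a)"
      using nonneg[OF that] pos[OF that] by auto
    ultimately show ?thesis
      unfolding h_def abs_le_iff by linarith
  qed
  have "(\<Sum>a\<in>T. f a * h a) = (\<Sum>a\<in>T. \<pi> a * h a) + (\<Sum>a\<in>T. (f a - \<pi> a) * h a)"
    by (simp add: sum.distrib[symmetric] algebra_simps)
  moreover have "(\<Sum>a\<in>T. \<pi> a * h a) \<le> - (\<Sum>a\<in>T. (sqrt (\<pi> a) - sqrt (r a))\<^sup>2) / 2"
    unfolding h_def using fin pos sum_\<pi> nonneg sum_r by (rule sqrt_ratio_contrast_le_neg_hellinger)
  moreover have "(\<Sum>a\<in>T. (f a - \<pi> a) * h a) \<le> (\<Sum>a\<in>T. \<bar>f a - \<pi> a\<bar> * (1 / sqrt (\<pi> a) + 1))"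
  proof (rule sum_mono)
    fix a
    assume "a \<in> T"
    have "(f a - \<pi> a) * h a \<le> \<bar>f a - \<pi> a\<bar> * \<bar>h a\<bar>"
      by (simp flip: abs_mult)
    also have "\<dots> \<le> \<bar>f a - \<pi> a\<bar> * (1 / sqrt (\<pi> a) + 1)"
      using h_bound[OF \<open>a \<in> T\<close>] by (intro mult_left_mono) auto
    finally show "(f a - \<pi> a) * h a \<le> \<bar>f a - \<pi> a\<bar> * (1 / sqrt (\<pi> a) + 1)" .
  qed
  ultimately show ?thesis
    using contrast unfolding h_def by linarith
qed

lemma tendsto_on_support_of_sqrt_ratio_contrast:
  fixes \<pi> :: "'a \<Rightarrow> real" and f r :: "nat \<Rightarrow> 'a \<Rightarrow> real"
  assumes fin: "finite T" and pos: "\<And>a. a \<in> T \<Longrightarrow> 0 < \<pi> a" and sum_\<pi>: "(\<Sum>a\<in>T. \<pi> a) = 1"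
    and nonneg: "\<And>n a. a \<in> T \<Longrightarrow> 0 \<le> r n a" and sum_r: "\<And>n. (\<Sum>a\<in>T. r n a) \<le> 1"
    and f_lim: "\<And>a. a \<in> T \<Longrightarrow> (\<lambda>n. f n a) \<longlonglongrightarrow> \<pi> a"
    and contrast: "eventually (\<lambda>n. 0 \<le> (\<Sum>a\<in>T. f n a * (sqrt (r n a / \<pi> a) - 1))) sequentially"
    and "a \<in> T"
  shows "(\<lambda>n. r n a) \<longlonglongrightarrow> \<pi> a"
proof -
  define E where "E n = 2 * (\<Sum>b\<in>T. \<bar>f n b - \<pi> b\<bar> * (1 / sqrt (\<pi> b) + 1))" for n
  have "E \<longlonglongrightarrow> 2 * (\<Sum>b\<in>T. \<bar>\<pi> b - \<pi> b\<bar> * (1 / sqrt (\<pi> b) + 1))"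
    unfolding E_def by (intro tendsto_intros f_lim)
  then have E_lim: "E \<longlonglongrightarrow> 0" by simp
  have bound: "eventually (\<lambda>n. (sqrt (\<pi> a) - sqrt (r n a))\<^sup>2 \<le> E n) sequentially"
    using contrast
  proof eventually_elim
    case (elim n)
    have "(sqrt (\<pi> a) - sqrt (r n a))\<^sup>2 \<le> (\<Sum>b\<in>T. (sqrt (\<pi> b) - sqrt (r n b))\<^sup>2)"
      using fin \<open>a \<in> T\<close> by (intro member_le_sum) auto
    also have "\<dots> \<le> E n"
      unfolding E_def using fin pos sum_\<pi> nonneg sum_r elim by (rule hellinger_le_freq_deviation)
    finally show ?case .
  qed
  have "(\<lambda>n. (sqrt (\<pi> a) - sqrt (r n a))\<^sup>2) \<longlonglongrightarrow> 0"
    by (rule tendsto_sandwich[OF _ bound tendsto_const E_lim]) simp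
  then have "(\<lambda>n. sqrt ((sqrt (\<pi> a) - sqrt (r n a))\<^sup>2)) \<longlonglongrightarrow> sqrt 0"
    by (rule tendsto_real_sqrt)
  then have "(\<lambda>n. \<bar>sqrt (r n a) - sqrt (\<pi> a)\<bar>) \<longlonglongrightarrow> 0"
    by (simp add: abs_minus_commute)
  then have "(\<lambda>n. sqrt (r n a)) \<longlonglongrightarrow> sqrt (\<pi> a)"
    by (simp add: LIM_zero_iff tendsto_rabs_zero_iff)
  then have "(\<lambda>n. (sqrt (r n a))\<^sup>2) \<longlonglongrightarrow> (sqrt (\<pi> a))\<^sup>2"
    by (rule tendsto_power)
  then show ?thesis
    using nonneg[OF \<open>a \<in> T\<close>] pos[OF \<open>a \<in> T\<close>] by simp
qed

lemma tendsto_zero_off_support: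
  fixes r :: "nat \<Rightarrow> 'a \<Rightarrow> real"
  assumes "finite P" "T \<subseteq> P" and nonneg: "\<And>n b. b \<in> P \<Longrightarrow> 0 \<le> r n b"
    and sum_r: "\<And>n. (\<Sum>b\<in>P. r n b) = 1"
    and lim: "\<And>b. b \<in> T \<Longrightarrow> (\<lambda>n. r n b) \<longlonglongrightarrow> \<pi> b" and sum_\<pi>: "(\<Sum>b\<in>T. \<pi> b) = 1"
    and "a \<in> P - T"
  shows "(\<lambda>n. r n a) \<longlonglongrightarrow> 0"
proof (rule tendsto_sandwich[OF _ _ tendsto_const])
  show "eventually (\<lambda>n. 0 \<le> r n a) sequentially"
    using nonneg \<open>a \<in> P - T\<close> by simp
  show "eventually (\<lambda>n. r n a \<le> 1 - (\<Sum>b\<in>T. r n b)) sequentially"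
  proof (rule always_eventually, rule allI)
    fix n
    have "(\<Sum>b\<in>insert a T. r n b) \<le> (\<Sum>b\<in>P. r n b)"
      using assms by (intro sum_mono2) auto
    then show "r n a \<le> 1 - (\<Sum>b\<in>T. r n b)"
      using assms finite_subset[OF \<open>T \<subseteq> P\<close>] sum_r[of n] by simp
  qed
  have "(\<lambda>n. 1 - (\<Sum>b\<in>T. r n b)) \<longlonglongrightarrow> 1 - (\<Sum>b\<in>T. \<pi> b)"
    by (intro tendsto_intros lim)
  then show "(\<lambda>n. 1 - (\<Sum>b\<in>T. r n b)) \<longlonglongrightarrow> 0"
    using sum_\<pi> by simp
qed

lemma tendsto_of_sqrt_ratio_contrast_nonneg:
  fixes P :: "'a set" and \<pi> :: "'a \<Rightarrow> real" and f r :: "nat \<Rightarrow> 'a \<Rightarrow> real"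
  defines "T \<equiv> {a\<in>P. 0 < \<pi> a}"
  assumes "finite P" and \<pi>_nonneg: "\<And>a. a \<in> P \<Longrightarrow> 0 \<le> \<pi> a" and sum_\<pi>: "(\<Sum>a\<in>P. \<pi> a) = 1"
    and r_nonneg: "\<And>n a. a \<in> P \<Longrightarrow> 0 \<le> r n a" and sum_r: "\<And>n. (\<Sum>a\<in>P. r n a) = 1"
    and f_lim: "\<And>a. a \<in> T \<Longrightarrow> (\<lambda>n. f n a) \<longlonglongrightarrow> \<pi> a"
    and contrast: "eventually (\<lambda>n. 0 \<le> (\<Sum>a\<in>T. f n a * (sqrt (r n a / \<pi> a) - 1))) sequentially"
    and "a \<in> P"
  shows "(\<lambda>n. r n a) \<longlonglongrightarrow> \<pi> a"
proof -
  have "T \<subseteq> P" "finite T"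
    using \<open>finite P\<close> by (auto simp: T_def)
  have sum_T: "(\<Sum>b\<in>T. \<pi> b) = 1"
    using \<open>finite P\<close> \<pi>_nonneg sum_\<pi>
    by (subst sum.mono_neutral_left[of P]) (force simp: T_def less_le)+
  have sum_r_T: "(\<Sum>b\<in>T. r n b) \<le> 1" for n
    using sum_mono2[OF \<open>finite P\<close> \<open>T \<subseteq> P\<close>, of "r n"] r_nonneg sum_r[of n] by simp
  have lim_T: "(\<lambda>n. r n b) \<longlonglongrightarrow> \<pi> b" if "b \<in> T" for b
  proof (rule tendsto_on_support_of_sqrt_ratio_contrast[OF \<open>finite T\<close> _ sum_T _ sum_r_T f_lim contrast that])
    show "0 < \<pi> c" if "c \<in> T" for c
      using that by (simp add: T_def)
    show "0 \<le> r n c" if "c \<in> T" for n c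
      using that \<open>T \<subseteq> P\<close> r_nonneg by blast
  qed
  show ?thesis
  proof (cases "a \<in> T")
    case True
    then show ?thesis by (rule lim_T)
  next
    case False
    with \<open>a \<in> P\<close> \<pi>_nonneg have "\<pi> a = 0" by (simp add: T_def less_le)
    moreover from \<open>a \<in> P\<close> False have "a \<in> P - T" by blast
    then have "(\<lambda>n. r n a) \<longlonglongrightarrow> 0"
      using tendsto_zero_off_support[OF \<open>finite P\<close> \<open>T \<subseteq> P\<close> _ sum_r lim_T sum_T] r_nonneg by blast
    ultimately show ?thesis by simp
  qed
qed

lemma mle_cell_probs_tendsto:
  fixes S :: "nat \<Rightarrow> nat set" and \<theta>hat :: "nat \<Rightarrow> nat \<Rightarrow> real"
  assumes "p \<ge> 1" and design: "conditional_design p \<mu>" and "\<theta> \<in> Theta p"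
    and support: "\<And>i. S i \<in> {a\<in>Pow {1..p}. 0 < \<mu> a * ind_dot a (weights p \<theta>)}"
    and freq: "\<And>a. a \<in> Pow {1..p} \<Longrightarrow>
                 (\<lambda>n. empirical_freq S a n) \<longlonglongrightarrow> \<mu> a * ind_dot a (weights p \<theta>)"
    and \<theta>hat: "\<And>n. \<theta>hat n \<in> Theta p" and mle: "\<And>n. loglik p n S \<theta> \<le> loglik p n S (\<theta>hat n)"
    and "a \<in> Pow {1..p}"
  shows "(\<lambda>n. \<mu> a * ind_dot a (weights p (\<theta>hat n))) \<longlonglongrightarrow> \<mu> a * ind_dot a (weights p \<theta>)"
proof -
  define \<pi> where "\<pi> b = \<mu> b * ind_dot b (weights p \<theta>)" for b
  define r where "r n b = \<mu> b * ind_dot b (weights p (\<theta>hat n))" for n b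
  define T where "T = {b\<in>Pow {1..p}. 0 < \<pi> b}"
  have T_pos: "0 < \<mu> b" "0 < ind_dot b (weights p \<theta>)" if "b \<in> T" for b
  proof -
    from that have "b \<in> Pow {1..p}" "\<pi> b \<noteq> 0" by (auto simp: T_def)
    then have "\<mu> b \<noteq> 0" "ind_dot b (weights p \<theta>) \<noteq> 0" by (auto simp: \<pi>_def)
    moreover have "0 \<le> \<mu> b" "0 \<le> ind_dot b (weights p \<theta>)"
      using design ind_dot_weights_nonneg[OF \<open>\<theta> \<in> Theta p\<close>, of b] \<open>b \<in> Pow {1..p}\<close>
      by (auto simp: conditional_design_def)
    ultimately show "0 < \<mu> b" "0 < ind_dot b (weights p \<theta>)" by simp_all
  qed
  have contrast: "eventually (\<lambda>n. 0 \<le> (\<Sum>b\<in>T. empirical_freq S b n * (sqrt (r n b / \<pi> b) - 1)))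
      sequentially"
  proof (rule eventually_sequentially_Suc[THEN iffD1], rule always_eventually, rule allI)
    fix n
    have "0 \<le> (\<Sum>b\<in>T. empirical_freq S b (Suc n) *
        (sqrt (ind_dot b (weights p (\<theta>hat (Suc n))) / ind_dot b (weights p \<theta>)) - 1))"
      by (rule loglik_le_imp_sqrt_ratio_contrast_nonneg[OF _ T_pos(2) _ _ mle])
        (use support in \<open>auto simp: T_def \<pi>_def\<close>)
    also have "\<dots> = (\<Sum>b\<in>T. empirical_freq S b (Suc n) * (sqrt (r (Suc n) b / \<pi> b) - 1))"
      by (intro sum.cong refl) (auto simp: r_def \<pi>_def dest: T_pos(1))
    finally show "0 \<le> (\<Sum>b\<in>T. empirical_freq S b (Suc n) * (sqrt (r (Suc n) b / \<pi> b) - 1))" .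
  qed
  have "(\<lambda>n. r n a) \<longlonglongrightarrow> \<pi> a"
  proof (rule tendsto_of_sqrt_ratio_contrast_nonneg[OF _ _ _ _ _ _ contrast[unfolded T_def]
        \<open>a \<in> Pow {1..p}\<close>])
    show "(\<Sum>b\<in>Pow {1..p}. \<pi> b) = 1" "(\<Sum>b\<in>Pow {1..p}. r n b) = 1" for n
      unfolding \<pi>_def r_def using sum_cell_probs[OF design \<open>p \<ge> 1\<close>] by simp_all
    show "0 \<le> \<pi> b" "0 \<le> r n b" if "b \<in> Pow {1..p}" for n b
      unfolding \<pi>_def r_def using cell_prob_nonneg[OF design _ that] \<open>\<theta> \<in> Theta p\<close> \<theta>hat by simp_all
    show "(\<lambda>n. empirical_freq S b n) \<longlonglongrightarrow> \<pi> b" if "b \<in> {b\<in>Pow {1..p}. 0 < \<pi> b}" for b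
      using freq that by (simp add: \<pi>_def)
  qed simp
  then show ?thesis unfolding r_def \<pi>_def .
qed

lemma mle_tendsto_on_typical_path:
  fixes S :: "nat \<Rightarrow> nat set" and \<theta>hat :: "nat \<Rightarrow> nat \<Rightarrow> real"
  assumes "p \<ge> 1" and design: "conditional_design p \<mu>" and A1: "assumption1 p \<mu>"
    and "\<theta> \<in> Theta p"
    and support: "\<And>i. S i \<in> {a\<in>Pow {1..p}. 0 < \<mu> a * ind_dot a (weights p \<theta>)}"
    and freq: "\<And>a. a \<in> Pow {1..p} \<Longrightarrow>
                 (\<lambda>n. empirical_freq S a n) \<longlonglongrightarrow> \<mu> a * ind_dot a (weights p \<theta>)"
    and \<theta>hat: "\<And>n. \<theta>hat n \<in> Theta p" and mle: "\<And>n. loglik p n S \<theta> \<le> loglik p n S (\<theta>hat n)"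
    and "i \<in> {1..p-1}"
  shows "(\<lambda>n. \<theta>hat n i) \<longlonglongrightarrow> \<theta> i"
proof -
  define u where "u n = (\<lambda>j. \<theta>hat n j - \<theta> j)" for n
  have "(\<lambda>n. u n i) \<longlonglongrightarrow> 0"
  proof (rule assumption1_tendsto_zero[OF A1 _ _ \<open>i \<in> {1..p-1}\<close>])
    show "\<bar>u n j\<bar> \<le> 1" if "j \<in> {1..p-1}" for n j
      using Theta_coord_bounds[OF \<theta>hat[of n] that] Theta_coord_bounds[OF \<open>\<theta> \<in> Theta p\<close> that]
      by (simp add: u_def abs_le_iff)
    show "(\<lambda>n. ind_dot a (Bmul p (u n))) \<longlonglongrightarrow> 0" if "a \<in> Pow {1..p}" "0 < \<mu> a" for a
    proof -
      have "(\<lambda>n. \<mu> a * ind_dot a (weights p (\<theta>hat n)) / \<mu> a)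
          \<longlonglongrightarrow> \<mu> a * ind_dot a (weights p \<theta>) / \<mu> a"
        using mle_cell_probs_tendsto[OF \<open>p \<ge> 1\<close> design \<open>\<theta> \<in> Theta p\<close> support freq \<theta>hat mle \<open>a \<in> Pow {1..p}\<close>]
          \<open>0 < \<mu> a\<close> by (intro tendsto_divide tendsto_const) auto
      then have "(\<lambda>n. ind_dot a (weights p (\<theta>hat n)) - ind_dot a (weights p \<theta>)) \<longlonglongrightarrow> 0"
        using \<open>0 < \<mu> a\<close> by (simp add: LIM_zero_iff)
      then show ?thesis by (simp add: u_def ind_dot_Bmul_diff)
    qed
  qed
  then show ?thesis by (simp add: u_def LIM_zero_iff)
qed

theorem mainTheorem4:
  fixes p :: nat and \<mu> :: "nat set \<Rightarrow> real" and \<theta> :: "nat \<Rightarrow> real"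
    and M :: "'s measure" and A :: "nat \<Rightarrow> 's \<Rightarrow> nat set"
    and \<theta>hat :: "nat \<Rightarrow> 's \<Rightarrow> nat \<Rightarrow> real"
  assumes "p \<ge> 4"
    and "conditional_design p \<mu>"
    and "assumption1 p \<mu>"
    and "\<theta> \<in> Theta p"
    and "prob_space M"
    and "\<forall>i. A i \<in> measurable M (count_space UNIV)"
    and "prob_space.indep_vars M (\<lambda>_. count_space UNIV) A UNIV"
    and "\<forall>i. \<forall>a\<in>Pow {1..p}.
           measure M {x\<in>space M. A i x = a} = \<mu> a * ind_dot a (\<lambda>j. alpha p j + Bmul p \<theta> j)"
    and "\<forall>n. \<forall>x\<in>space M. \<theta>hat n x \<in> Theta p \<and>
           (\<forall>\<theta>'\<in>Theta p. loglik p n (\<lambda>i. A i x) \<theta>' \<le> loglik p n (\<lambda>i. A i x) (\<theta>hat n x))"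
  shows "AE x in M. (\<forall>i\<in>{1..p-1}. (\<lambda>n. \<theta>hat n x i) \<longlonglongrightarrow> \<theta> i) \<and>
           (\<forall>j\<in>{1..p}. (\<lambda>n. alpha p j + Bmul p (\<theta>hat n x) j) \<longlonglongrightarrow> alpha p j + Bmul p \<theta> j)"
proof -
  interpret prob_space M by fact
  have "p \<ge> 1" using \<open>p \<ge> 4\<close> by simp \<comment> \<open>only \<open>p \<ge> 1\<close> is needed\<close>
  have "AE x in M. (\<forall>i. A i x \<in> {a\<in>Pow {1..p}. 0 < \<mu> a * ind_dot a (weights p \<theta>)}) \<and>
      (\<forall>a\<in>Pow {1..p}. (\<lambda>n. empirical_freq (\<lambda>i. A i x) a n) \<longlonglongrightarrow> \<mu> a * ind_dot a (weights p \<theta>))"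
    using assms(6-8) sum_cell_probs[OF assms(2) \<open>p \<ge> 1\<close>]
    by (intro AE_sample_path_typical) auto
  then show ?thesis
    using AE_space
  proof eventually_elim
    case (elim x)
    then have "(\<lambda>n. \<theta>hat n x i) \<longlonglongrightarrow> \<theta> i" if "i \<in> {1..p-1}" for i
      using assms(9) \<open>\<theta> \<in> Theta p\<close>
      by (intro mle_tendsto_on_typical_path[where S = "\<lambda>i. A i x" and \<theta>hat = "\<lambda>n. \<theta>hat n x",
            OF \<open>p \<ge> 1\<close> assms(2-4) _ _ _ _ that]) auto
    then show ?case
      by (auto intro!: tendsto_add tendsto_const Bmul_tendsto)
  qed
qed

end
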